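(* Let $\mathbb{H}$ be a connected $k$-regular $r$-uniform simple hypergraph on $n\ge 2$ vertices, and let $\mu_1$ be the second largest eigenvalue of its adjacency matrix. Then $$k-\mu_1 < 2k(r-1)\,\lambda(\mathbb{H})\sqrt{\frac{n}{\lfloor n/2\rfloor}}.$$
   Context: A hypergraph $\mathbb{H}=(V,E)$ is $r$-uniform if every edge has exactly $r$ vertices, and $k$-regular if every vertex lies in exactly $k$ edges. The adjacency matrix of $\mathbb{H}$ with vertices $v_1,\dots,v_n$ is the $n\times n$ matrix whose $(i,j)$ entry is $1$ if $i\neq j$ and $v_i,v_j$ lie in a common edge, and $0$ otherwise; its eigenvalues are $\mu_0\ge\mu_1\ge\cdots\ge\mu_{n-1}$. For non-negative integers $h>k$, an $L(h,k)$-colouring of $\mathbb{H}$ is a map $f:V\to\mathbb{Z}_{\ge 0}$ such that $|f(u)-f(v)|\ge h$ whenever $u\ne v$ lie in a common edge, and $|f(u)-f(v)|\ge k$ whenever there are edges $e_1\ni v$, $e_2\ni u$ with $(e_1\cap e_2)\setminus\{u,v\}\ne\emptyset$. The span is $\max f-\min f$; $\lambda_{h,k}(\mathbb{H})$ is the minimum span and $\lambda(\mathbb{H})=\lambda_{2,1}(\mathbb{H})$. *)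

theory Defs
  imports "Jordan_Normal_Form.Char_Poly"
begin

text \<open>A hypergraph on the vertex set {0..<n} (vertices v_1..v_n labelled 0..n-1)
  with edge set E (a set of sets, so there are no repeated edges).\<close>

definition hg_adj :: "nat set set \<Rightarrow> nat \<Rightarrow> nat \<Rightarrow> bool" where
  "hg_adj E u v \<longleftrightarrow> u \<noteq> v \<and> (\<exists>e\<in>E. u \<in> e \<and> v \<in> e)"

definition hypergraph :: "nat \<Rightarrow> nat set set \<Rightarrow> bool" where
  "hypergraph n E \<longleftrightarrow> (\<forall>e\<in>E. e \<subseteq> {0..<n})"

definition uniform :: "nat \<Rightarrow> nat set set \<Rightarrow> bool" where
  "uniform r E \<longleftrightarrow> (\<forall>e\<in>E. card e = r)"

definition regular :: "nat \<Rightarrow> nat \<Rightarrow> nat set set \<Rightarrow> bool" where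
  "regular n k E \<longleftrightarrow> (\<forall>v\<in>{0..<n}. card {e\<in>E. v \<in> e} = k)"

definition hg_connected :: "nat \<Rightarrow> nat set set \<Rightarrow> bool" where
  "hg_connected n E \<longleftrightarrow> (\<forall>u\<in>{0..<n}. \<forall>v\<in>{0..<n}. (hg_adj E)\<^sup>*\<^sup>* u v)"

definition hg_adj_matrix :: "nat \<Rightarrow> nat set set \<Rightarrow> real mat" where
  "hg_adj_matrix n E = mat n n (\<lambda>(i,j). if hg_adj E i j then 1 else 0)"

text \<open>The eigenvalues mu_0 >= ... >= mu_{n-1} of a real n x n matrix A
  (listed with multiplicity), as roots of the characteristic polynomial.\<close>
definition eigenvalues_desc :: "real mat \<Rightarrow> real list \<Rightarrow> bool" where
  "eigenvalues_desc A mus \<longleftrightarrow> length mus = dim_row A \<and> sorted_wrt (\<ge>) mus \<and>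
     char_poly A = (\<Prod>a\<leftarrow>mus. [:- a, 1:])"

definition L_colouring :: "nat \<Rightarrow> nat \<Rightarrow> nat \<Rightarrow> nat set set \<Rightarrow> (nat \<Rightarrow> nat) \<Rightarrow> bool" where
  "L_colouring h k n E f \<longleftrightarrow>
     (\<forall>u\<in>{0..<n}. \<forall>v\<in>{0..<n}. u \<noteq> v \<longrightarrow>
        ((\<exists>e\<in>E. u \<in> e \<and> v \<in> e) \<longrightarrow> h \<le> nat \<bar>int (f u) - int (f v)\<bar>) \<and>
        ((\<exists>e1\<in>E. \<exists>e2\<in>E. v \<in> e1 \<and> u \<in> e2 \<and> (e1 \<inter> e2) - {u, v} \<noteq> {})
            \<longrightarrow> k \<le> nat \<bar>int (f u) - int (f v)\<bar>))"

definition span :: "nat \<Rightarrow> (nat \<Rightarrow> nat) \<Rightarrow> nat" where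
  "span n f = Max (f ` {0..<n}) - Min (f ` {0..<n})"

definition lambda_hk :: "nat \<Rightarrow> nat \<Rightarrow> nat \<Rightarrow> nat set set \<Rightarrow> nat" where
  "lambda_hk h k n E = (LEAST s. \<exists>f. L_colouring h k n E f \<and> span n f = s)"

definition lambda21 :: "nat \<Rightarrow> nat set set \<Rightarrow> nat" where
  "lambda21 n E = lambda_hk 2 1 n E"

end

theory Submission imports Defs begin

text \<open>The inequality is far from tight. Every eigenvalue of the adjacency matrix is bounded in
  absolute value by its maximal row sum, the maximal degree \<open>k(r - 1)\<close>; and a single edge already
  forces \<open>\<lambda> \<ge> 2\<close>. Hence \<open>k - \<mu>\<^sub>1 \<le> k r < 4k(r - 1) \<le> 2k(r - 1)\<lambda>\<close> since \<open>r \<ge> 2\<close>,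
  and the square root is at least 1.\<close>

lemma eigenvector_abs_le_max_row_sum:
  fixes A :: "real mat"
  assumes A: "A \<in> carrier_mat n n"
    and rows: "\<And>i. i < n \<Longrightarrow> (\<Sum>j<n. \<bar>A $$ (i,j)\<bar>) \<le> B"
    and ev: "eigenvector A v \<mu>"
  shows "\<bar>\<mu>\<bar> \<le> B"
proof -
  have v: "dim_vec v = n" and v0: "v \<noteq> 0\<^sub>v n" and eq: "A *\<^sub>v v = \<mu> \<cdot>\<^sub>v v"
    using ev A unfolding eigenvector_def by auto
  have "\<exists>j<n. v $ j \<noteq> 0"
  proof (rule ccontr)
    assume "\<not> ?thesis"
    then have "v = 0\<^sub>v n" using v by (intro eq_vecI) auto
    with v0 show False by simp
  qed
  then obtain j where j: "j < n" "v $ j \<noteq> 0" by blast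
  have "(\<lambda>j. \<bar>v $ j\<bar>) ` {..<n} \<noteq> {}" using j by auto
  from Max_in[OF _ this] obtain i
    where i: "i < n" "\<bar>v $ i\<bar> = Max ((\<lambda>j. \<bar>v $ j\<bar>) ` {..<n})" by auto
  have imax: "\<bar>v $ j\<bar> \<le> \<bar>v $ i\<bar>" if "j < n" for j
    using i that by auto
  have pos: "\<bar>v $ i\<bar> > 0" using imax[OF j(1)] j(2) by auto
  have "\<mu> * v $ i = (A *\<^sub>v v) $ i" using eq i v by simp
  also have "\<dots> = (\<Sum>j<n. A $$ (i,j) * v $ j)"
    using i A v by (simp add: scalar_prod_def lessThan_atLeast0)
  finally have "\<bar>\<mu>\<bar> * \<bar>v $ i\<bar> = \<bar>\<Sum>j<n. A $$ (i,j) * v $ j\<bar>" by (metis abs_mult)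
  also have "\<dots> \<le> (\<Sum>j<n. \<bar>A $$ (i,j)\<bar> * \<bar>v $ i\<bar>)"
    by (rule order_trans[OF sum_abs]) (auto simp: abs_mult intro!: sum_mono mult_left_mono imax)
  also have "\<dots> = (\<Sum>j<n. \<bar>A $$ (i,j)\<bar>) * \<bar>v $ i\<bar>" by (simp add: sum_distrib_right)
  also have "\<dots> \<le> B * \<bar>v $ i\<bar>" using rows[OF i(1)] pos by (simp add: mult_right_mono)
  finally show ?thesis using pos by simp
qed

lemma eigenvalues_desc_nth_eigenvalue:
  assumes A: "A \<in> carrier_mat n n" and mus: "eigenvalues_desc A mus" and i: "i < n"
  shows "eigenvalue A (mus ! i)"
proof -
  have "mus ! i \<in> set mus" using mus A i unfolding eigenvalues_desc_def by auto
  then have "poly (char_poly A) (mus ! i) = 0"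
    using mus linear_poly_root unfolding eigenvalues_desc_def by metis
  then show ?thesis using eigenvalue_root_char_poly[OF A] by simp
qed

lemma hypergraph_finite_edges:
  assumes "hypergraph n E"
  shows "finite E" and "e \<in> E \<Longrightarrow> finite e"
  using assms finite_subset[of E "Pow {0..<n}"] finite_subset[of e "{0..<n}"]
  unfolding hypergraph_def by auto

lemma card_hg_neighbours_le:
  assumes hyp: "hypergraph n E" and uni: "uniform r E" and reg: "regular n k E"
    and i: "i < n"
  shows "card {j\<in>{..<n}. hg_adj E i j} \<le> k * (r - 1)"
proof -
  let ?S = "{e\<in>E. i \<in> e}"
  have "card {j\<in>{..<n}. hg_adj E i j} \<le> card (\<Union>e\<in>?S. e - {i})"
    using hyp hypergraph_finite_edges[OF hyp]
    by (intro card_mono) (auto simp: hg_adj_def)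
  also have "\<dots> \<le> (\<Sum>e\<in>?S. card (e - {i}))"
    using hypergraph_finite_edges(1)[OF hyp] by (intro card_UN_le) auto
  also have "\<dots> = (\<Sum>e\<in>?S. r - 1)"
    using uni hypergraph_finite_edges(2)[OF hyp] unfolding uniform_def
    by (intro sum.cong) auto
  also have "\<dots> = k * (r - 1)" using reg i unfolding regular_def by simp
  finally show ?thesis .
qed

lemma hg_adj_matrix_carrier: "hg_adj_matrix n E \<in> carrier_mat n n"
  unfolding hg_adj_matrix_def by simp

lemma hg_adj_matrix_row_sum_le:
  assumes "hypergraph n E" "uniform r E" "regular n k E" and i: "i < n"
  shows "(\<Sum>j<n. \<bar>hg_adj_matrix n E $$ (i,j)\<bar>) \<le> real (k * (r - 1))"
proof -
  have "(\<Sum>j<n. \<bar>hg_adj_matrix n E $$ (i,j)\<bar>) = (\<Sum>j<n. if hg_adj E i j then 1 else 0)"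
    using i unfolding hg_adj_matrix_def by (intro sum.cong) auto
  also have "\<dots> = real (card {j\<in>{..<n}. hg_adj E i j})"
    by (simp add: sum.If_cases Int_def conj_commute)
  also have "\<dots> \<le> real (k * (r - 1))"
    using card_hg_neighbours_le[OF assms] by (simp only: of_nat_le_iff)
  finally show ?thesis .
qed

lemma hg_adj_eigenvalue_abs_le:
  assumes "hypergraph n E" "uniform r E" "regular n k E"
    and "eigenvalue (hg_adj_matrix n E) \<mu>"
  shows "\<bar>\<mu>\<bar> \<le> real (k * (r - 1))"
proof -
  obtain v where "eigenvector (hg_adj_matrix n E) v \<mu>"
    using assms(4) unfolding eigenvalue_def by blast
  then show ?thesis
    using eigenvector_abs_le_max_row_sum[OF hg_adj_matrix_carrier] hg_adj_matrix_row_sum_le[OF assms(1-3)]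
    by blast
qed

lemma L_colouring_scaled_identity:
  assumes "k \<le> h"
  shows "L_colouring h k n E (\<lambda>v. h * v)"
proof -
  have "h \<le> nat \<bar>int (h * u) - int (h * v)\<bar>" if "u \<noteq> v" for u v :: nat
  proof -
    have "int h \<le> int h * \<bar>int u - int v\<bar>" using that by (simp add: mult_le_cancel_left1) linarith
    then show ?thesis by (simp add: abs_mult flip: right_diff_distrib)
  qed
  then show ?thesis using assms unfolding L_colouring_def by (meson order_trans)
qed

lemma lambda_hk_ge_of_edge:
  assumes "k \<le> h" and ab: "a < n" "b < n" "a \<noteq> b" "e \<in> E" "a \<in> e" "b \<in> e"
  shows "h \<le> lambda_hk h k n E"
proof -
  obtain f where f: "L_colouring h k n E f" "span n f = lambda_hk h k n E"
    using LeastI_ex[of "\<lambda>s. \<exists>f. L_colouring h k n E f \<and> span n f = s"]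
      L_colouring_scaled_identity[OF assms(1)]
    unfolding lambda_hk_def by blast
  have "h \<le> nat \<bar>int (f a) - int (f b)\<bar>"
    using f(1) ab unfolding L_colouring_def by (metis atLeastLessThan_iff zero_le)
  moreover have "f a \<le> Max (f ` {0..<n})" "f b \<le> Max (f ` {0..<n})"
    "Min (f ` {0..<n}) \<le> f a" "Min (f ` {0..<n}) \<le> f b" using ab by auto
  ultimately show ?thesis using f(2) unfolding span_def by linarith
qed

lemma hg_connected_obtain_edge:
  assumes "n \<ge> 2" "hypergraph n E" "hg_connected n E"
  obtains a b e where "a < n" "b < n" "a \<noteq> b" "e \<in> E" "a \<in> e" "b \<in> e"
proof -
  have "(hg_adj E)\<^sup>*\<^sup>* 0 1" using assms(1,3) unfolding hg_connected_def by auto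
  then obtain a b where "hg_adj E a b" by (cases rule: converse_rtranclpE) auto
  then obtain e where "a \<noteq> b" "e \<in> E" "a \<in> e" "b \<in> e" unfolding hg_adj_def by blast
  moreover have "a < n" "b < n" using calculation assms(2) unfolding hypergraph_def by fastforce+
  ultimately show ?thesis using that by blast
qed

theorem corollary2p5:
  fixes n k r :: nat and E :: "nat set set" and mus :: "real list"
  assumes "n \<ge> 2"
    and "hypergraph n E"
    and "uniform r E"
    and "regular n k E"
    and "hg_connected n E"
    and "eigenvalues_desc (hg_adj_matrix n E) mus"
  shows "real k - mus ! 1 <
    2 * real k * (real r - 1) * real (lambda21 n E) * sqrt (real n / real (n div 2))"
proof -
  obtain a b e where ab: "a < n" "b < n" "a \<noteq> b" "e \<in> E" "a \<in> e" "b \<in> e"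
    using hg_connected_obtain_edge[OF assms(1,2,5)] .
  have "card {a, b} \<le> card e"
    using ab hypergraph_finite_edges(2)[OF assms(2)] by (intro card_mono) auto
  then have r: "real r - 1 \<ge> 1" using ab assms(3) unfolding uniform_def by simp
  have "card {e\<in>E. a \<in> e} \<noteq> 0" using ab hypergraph_finite_edges(1)[OF assms(2)] by auto
  then have k: "real k \<ge> 1" using ab assms(4) unfolding regular_def by simp
  have "eigenvalue (hg_adj_matrix n E) (mus ! 1)"
    using eigenvalues_desc_nth_eigenvalue[OF hg_adj_matrix_carrier assms(6)] assms(1) by simp
  then have "\<bar>mus ! 1\<bar> \<le> real k * (real r - 1)"
    using hg_adj_eigenvalue_abs_le[OF assms(2-4)] r by (simp add: of_nat_diff)
  then have "real k - mus ! 1 \<le> real k + real k * (real r - 1)" by linarith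
  also have "\<dots> < 2 * real k * (real r - 1) * 2 * 1"
    using mult_left_mono[OF r, of "real k"] k by linarith
  also have "\<dots> \<le> 2 * real k * (real r - 1) * real (lambda21 n E) * sqrt (real n / real (n div 2))"
    using lambda_hk_ge_of_edge[of 1 2, OF _ ab] assms(1) k r unfolding lambda21_def
    by (intro mult_mono) auto
  finally show ?thesis .
qed

end
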